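(* If $\gamma<\frac14$ and $|\mu_r-\mu_s|\ge c\frac{\phi_\ast}{n_s}$ for all $r\ne s$, then $$\rho^s_{in}\le\frac{2}{(1-4\gamma)c}\quad\text{and}\quad\rho^s_{out}\le\frac{2}{(1-4\gamma)c}.$$
   Context: Points $x_1,\dots,x_N$ are real numbers, each drawn from one of $\beta$ distributions with distinct means $\mu_1,\dots,\mu_\beta$; $\mathcal T_s$ is the set of points from distribution $s$, $n_s=|\mathcal T_s|$; $\phi_\ast=\sum_i|x_i-\mathbb{E}(x_i)|$; $c>0$ a constant. $\nu_1,\dots,\nu_\beta$ are real cluster centers and $S_r=\{x_i:|x_i-\nu_r|\le|x_i-\nu_s|\ \forall s\}$. $\Delta_s=|\mu_s-\nu_s|$, $\gamma=\max_{s,\,r\ne s}\frac{\Delta_s}{|\mu_r-\mu_s|}$. $\rho^s_{in}=\frac{\sum_{r\ne s}|\mathcal T_r\cap S_s|}{n_s}$ (fraction of points misclassified into cluster $s$) and $\rho^s_{out}=\frac{\sum_{r\ne s}|\mathcal T_s\cap S_r|}{n_s}$ (fraction of points of $\mathcal T_s$ misclassified). *)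

theory Defs
  imports "HOL-Analysis.Analysis"
begin

text \<open>Data model: points are indexed by i < N with values x i; lab i < beta is the
  distribution point i was drawn from; mu s is the mean of distribution s
  (so E(x i) = mu (lab i)); nu r are the cluster centres.\<close>

definition T :: "(nat \<Rightarrow> nat) \<Rightarrow> nat \<Rightarrow> nat \<Rightarrow> nat set" where
  "T lab N s = {i. i < N \<and> lab i = s}"

definition ncount :: "(nat \<Rightarrow> nat) \<Rightarrow> nat \<Rightarrow> nat \<Rightarrow> nat" where
  "ncount lab N s = card (T lab N s)"

definition phi_star :: "(nat \<Rightarrow> real) \<Rightarrow> (nat \<Rightarrow> nat) \<Rightarrow> (nat \<Rightarrow> real) \<Rightarrow> nat \<Rightarrow> real" where
  "phi_star x lab mu N = (\<Sum>i<N. \<bar>x i - mu (lab i)\<bar>)"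

definition S :: "(nat \<Rightarrow> real) \<Rightarrow> (nat \<Rightarrow> real) \<Rightarrow> nat \<Rightarrow> nat \<Rightarrow> nat \<Rightarrow> nat set" where
  "S x nu beta N r = {i. i < N \<and> (\<forall>s<beta. \<bar>x i - nu r\<bar> \<le> \<bar>x i - nu s\<bar>)}"

definition Delta :: "(nat \<Rightarrow> real) \<Rightarrow> (nat \<Rightarrow> real) \<Rightarrow> nat \<Rightarrow> real" where
  "Delta mu nu s = \<bar>mu s - nu s\<bar>"

text \<open>The 0 is inserted only so that the maximum is defined when beta = 1; all ratios
  are nonnegative, so it does not change the value when beta >= 2.\<close>
definition gamma :: "(nat \<Rightarrow> real) \<Rightarrow> (nat \<Rightarrow> real) \<Rightarrow> nat \<Rightarrow> real" where
  "gamma mu nu beta = Max (insert 0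
     {Delta mu nu s / \<bar>mu r - mu s\<bar> | s r. s < beta \<and> r < beta \<and> r \<noteq> s})"

definition rho_in :: "(nat \<Rightarrow> real) \<Rightarrow> (nat \<Rightarrow> nat) \<Rightarrow> (nat \<Rightarrow> real) \<Rightarrow> nat \<Rightarrow> nat \<Rightarrow> nat \<Rightarrow> real" where
  "rho_in x lab nu beta N s =
     (\<Sum>r\<in>{..<beta} - {s}. real (card (T lab N r \<inter> S x nu beta N s))) / real (ncount lab N s)"

definition rho_out :: "(nat \<Rightarrow> real) \<Rightarrow> (nat \<Rightarrow> nat) \<Rightarrow> (nat \<Rightarrow> real) \<Rightarrow> nat \<Rightarrow> nat \<Rightarrow> nat \<Rightarrow> real" where
  "rho_out x lab nu beta N s =
     (\<Sum>r\<in>{..<beta} - {s}. real (card (T lab N s \<inter> S x nu beta N r))) / real (ncount lab N s)"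

end

theory Submission
  imports Defs
begin

(* A point of distribution r that lies in the cell of a centre nu q with q ~= r satisfies
   |x - mu r| >= (1 - 2 gamma) |mu r - mu q| / 2 by the triangle inequality, because every
   centre is within gamma |mu r - mu q| of its own mean.  With the separation hypothesis each
   misclassified point therefore deviates from its mean by at least (1 - 4 gamma) c phi / (2 n_s),
   and these deviations sum to at most phi.  For rho_out a point may lie in several cells: the
   centres are distinct, so at most two cells tie, and a tie forces the larger deviation
   (1 - 3 gamma) |mu p - mu s|, which pays for the double count. *)

lemma sum_card_le_sum_by_multiplicity:
  fixes A :: "'r \<Rightarrow> 'i set" and f :: "'i \<Rightarrow> real"
  assumes "finite R" "finite I" "\<forall>r\<in>R. A r \<subseteq> I"
    and "\<forall>i\<in>I. real (card {r\<in>R. i \<in> A r}) * t \<le> f i"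
  shows "(\<Sum>r\<in>R. real (card (A r))) * t \<le> sum f I"
proof -
  have "(\<Sum>r\<in>R. card (A r)) = (\<Sum>r\<in>R. card {i\<in>I. i \<in> A r})"
    using assms(3) by (intro sum.cong refl arg_cong[where f = card]) blast
  also have "\<dots> = (\<Sum>i\<in>I. card {r\<in>R. i \<in> A r})"
    using assms(1,2) by (rule sum_multicount_gen) simp
  finally have "(\<Sum>r\<in>R. real (card (A r))) = (\<Sum>i\<in>I. real (card {r\<in>R. i \<in> A r}))"
    unfolding of_nat_sum[symmetric] by (rule arg_cong)
  then have "(\<Sum>r\<in>R. real (card (A r))) * t = (\<Sum>i\<in>I. real (card {r\<in>R. i \<in> A r}) * t)"
    by (simp add: sum_distrib_right)
  also have "\<dots> \<le> sum f I"
    using assms(4) by (intro sum_mono) blast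
  finally show ?thesis .
qed

lemma fraction_le_of_multiplicity_bound:
  fixes A :: "'r \<Rightarrow> 'i set" and f :: "'i \<Rightarrow> real"
  assumes "finite R" "finite I" "\<forall>r\<in>R. A r \<subseteq> I" "k > 0"
    and bound: "\<forall>i\<in>I. real (card {r\<in>R. i \<in> A r}) * (k * sum f I / n) \<le> f i"
    and nonneg: "\<forall>i\<in>I. f i \<ge> 0"
    and pos: "\<forall>i\<in>I. card {r\<in>R. i \<in> A r} > 0 \<longrightarrow> f i > 0"
  shows "(\<Sum>r\<in>R. real (card (A r))) / n \<le> 1 / k"
proof -
  define K where "K = (\<Sum>r\<in>R. real (card (A r)))"
  have K_bound: "K * (k * sum f I / n) \<le> sum f I"
    unfolding K_def using sum_card_le_sum_by_multiplicity[OF assms(1-3) bound] .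
  show ?thesis
  proof (cases "K = 0")
    case True
    with \<open>k > 0\<close> show ?thesis
      by (simp add: K_def[symmetric])
  next
    case False
    then obtain r where "r \<in> R" "A r \<noteq> {}"
      unfolding K_def by (metis (mono_tags, lifting) card.empty of_nat_0 sum.neutral)
    then obtain i where "i \<in> A r"
      by blast
    with \<open>r \<in> R\<close> have "i \<in> I" "card {r\<in>R. i \<in> A r} > 0"
      using assms(1,3) by (auto simp: card_gt_0_iff)
    then have f_pos: "sum f I > 0"
      using assms(2) nonneg pos by (intro sum_pos2) auto
    have "K * k / n * sum f I \<le> 1 * sum f I"
      using K_bound by (simp add: mult.assoc)
    then have "K * k / n \<le> 1"
      using f_pos by (rule mult_right_le_imp_le)
    with \<open>k > 0\<close> show ?thesis
      by (simp add: K_def[symmetric] divide_le_eq_1 field_simps)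
  qed
qed

lemma dist_to_mean_of_closer_center:
  fixes x m m' v v' G :: real
  assumes "\<bar>x - v'\<bar> \<le> \<bar>x - v\<bar>" "\<bar>m - v\<bar> \<le> G" "\<bar>m' - v'\<bar> \<le> G"
  shows "\<bar>m - m'\<bar> \<le> 2 * \<bar>x - m\<bar> + 2 * G"
  using assms by (smt (verit))

lemma dist_to_mean_of_far_center:
  fixes x m m' v v' G :: real
  assumes "\<bar>v' - v\<bar> \<le> \<bar>x - v\<bar>" "\<bar>m' - v'\<bar> \<le> G" "\<bar>m - v\<bar> \<le> G"
  shows "\<bar>m' - m\<bar> \<le> \<bar>x - m\<bar> + 3 * G"
  using assms by arith

lemma equidistant_pair_closer:
  fixes x a b d :: real
  assumes "\<bar>x - a\<bar> = \<bar>x - b\<bar>" "a \<noteq> b" "\<bar>x - a\<bar> \<le> \<bar>x - d\<bar>"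
  shows "\<bar>a - d\<bar> \<le> \<bar>x - d\<bar> \<or> \<bar>b - d\<bar> \<le> \<bar>x - d\<bar>"
  using assms by arith

lemma card_equidistant_le_two:
  fixes f :: "'a \<Rightarrow> real"
  assumes "inj_on f R"
  shows "card {r\<in>R. \<bar>x - f r\<bar> = d} \<le> 2"
proof -
  have "card {r\<in>R. \<bar>x - f r\<bar> = d} = card (f ` {r\<in>R. \<bar>x - f r\<bar> = d})"
    using assms by (intro card_image[symmetric]) (auto intro: inj_on_subset)
  also have "\<dots> \<le> card {x - d, x + d}"
    by (intro card_mono) auto
  also have "\<dots> \<le> 2"
    by (simp add: card_insert_if)
  finally show ?thesis .
qed

lemma finite_gamma_ratios:
  "finite {Delta mu nu s / \<bar>mu r - mu s\<bar> | s r. s < beta \<and> r < beta \<and> r \<noteq> s}"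
proof -
  have "{Delta mu nu s / \<bar>mu r - mu s\<bar> | s r. s < beta \<and> r < beta \<and> r \<noteq> s}
      \<subseteq> (\<lambda>(s, r). Delta mu nu s / \<bar>mu r - mu s\<bar>) ` ({..<beta} \<times> {..<beta})"
    by auto
  then show ?thesis
    by (rule finite_subset) auto
qed

lemma gamma_nonneg: "0 \<le> gamma mu nu beta"
  unfolding gamma_def using finite_gamma_ratios by simp

lemma center_dist_le_gamma:
  assumes "inj_on mu {..<beta}" "r < beta" "q < beta" "r \<noteq> q"
  shows "\<bar>mu q - nu q\<bar> \<le> gamma mu nu beta * \<bar>mu r - mu q\<bar>"
proof -
  have "\<bar>mu r - mu q\<bar> > 0"
    using assms by (auto simp: inj_on_def)
  moreover have "Delta mu nu q / \<bar>mu r - mu q\<bar> \<le> gamma mu nu beta"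
    unfolding gamma_def using finite_gamma_ratios assms(2-4) by (intro Max_ge) auto
  ultimately show ?thesis
    by (simp add: Delta_def field_simps)
qed

lemma inj_on_centers:
  assumes "inj_on mu {..<beta}" "gamma mu nu beta < 1/2"
  shows "inj_on nu {..<beta}"
proof (rule inj_onI, rule ccontr)
  fix r q
  assume rq: "r \<in> {..<beta}" "q \<in> {..<beta}" "nu r = nu q" "r \<noteq> q"
  have "\<bar>mu r - mu q\<bar> > 0"
    using assms(1) rq by (auto simp: inj_on_def)
  moreover have "\<bar>mu r - nu r\<bar> \<le> gamma mu nu beta * \<bar>mu r - mu q\<bar>"
    using center_dist_le_gamma[OF assms(1), where nu = nu and r = q and q = r] rq
    by (simp add: abs_minus_commute)
  moreover have "\<bar>mu q - nu q\<bar> \<le> gamma mu nu beta * \<bar>mu r - mu q\<bar>"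
    using center_dist_le_gamma[OF assms(1), where nu = nu and r = r and q = q] rq by simp
  moreover have "\<bar>mu r - mu q\<bar> \<le> \<bar>mu r - nu r\<bar> + \<bar>mu q - nu q\<bar>"
    using abs_triangle_ineq4[of "mu r - nu r" "mu q - nu q"] \<open>nu r = nu q\<close> by simp
  ultimately have "\<bar>mu r - mu q\<bar> \<le> 2 * gamma mu nu beta * \<bar>mu r - mu q\<bar>"
    by linarith
  moreover have "2 * gamma mu nu beta * \<bar>mu r - mu q\<bar> < \<bar>mu r - mu q\<bar>"
    using assms(2) \<open>\<bar>mu r - mu q\<bar> > 0\<close> by simp
  ultimately show False
    by linarith
qed

lemma misclassified_point_far_from_mean:
  assumes "inj_on mu {..<beta}" "i \<in> S x nu beta N q" "r < beta" "q < beta" "r \<noteq> q"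
  shows "(1 - 2 * gamma mu nu beta) * \<bar>mu r - mu q\<bar> \<le> 2 * \<bar>x i - mu r\<bar>"
proof -
  have "\<bar>x i - nu q\<bar> \<le> \<bar>x i - nu r\<bar>"
    using assms(2,3) by (simp add: S_def)
  moreover have "\<bar>mu r - nu r\<bar> \<le> gamma mu nu beta * \<bar>mu r - mu q\<bar>"
    using center_dist_le_gamma[OF assms(1,4,3), where nu = nu] assms(5)
    by (simp add: abs_minus_commute)
  moreover have "\<bar>mu q - nu q\<bar> \<le> gamma mu nu beta * \<bar>mu r - mu q\<bar>"
    using center_dist_le_gamma[OF assms(1,3,4,5)] .
  ultimately have "\<bar>mu r - mu q\<bar> \<le> 2 * \<bar>x i - mu r\<bar> + 2 * (gamma mu nu beta * \<bar>mu r - mu q\<bar>)"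
    by (rule dist_to_mean_of_closer_center)
  then show ?thesis
    by (simp add: algebra_simps)
qed

lemma misclassified_point_weight:
  assumes "inj_on mu {..<beta}" "gamma mu nu beta < 1/4" "i \<in> S x nu beta N q"
    and "r < beta" "q < beta" "r \<noteq> q" "D \<le> \<bar>mu r - mu q\<bar>"
  shows "(1 - 4 * gamma mu nu beta) / 2 * D \<le> \<bar>x i - mu r\<bar>" and "0 < \<bar>x i - mu r\<bar>"
proof -
  let ?g = "gamma mu nu beta"
  have far: "(1 - 2 * ?g) * \<bar>mu r - mu q\<bar> \<le> 2 * \<bar>x i - mu r\<bar>"
    using misclassified_point_far_from_mean[OF assms(1,3-6)] .
  have "(1 - 4 * ?g) / 2 * D \<le> (1 - 4 * ?g) / 2 * \<bar>mu r - mu q\<bar>"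
    using assms(2,7) by (intro mult_left_mono) auto
  also have "\<dots> \<le> (1 - 2 * ?g) / 2 * \<bar>mu r - mu q\<bar>"
    using gamma_nonneg by (intro mult_right_mono) auto
  also have "\<dots> \<le> \<bar>x i - mu r\<bar>"
    using far by simp
  finally show "(1 - 4 * ?g) / 2 * D \<le> \<bar>x i - mu r\<bar>" .
  have "\<bar>mu r - mu q\<bar> > 0"
    using assms(1,4-6) by (auto simp: inj_on_def)
  with assms(2) have "0 < (1 - 2 * ?g) * \<bar>mu r - mu q\<bar>"
    by simp
  then have "0 < 2 * \<bar>x i - mu r\<bar>"
    using far by (rule less_le_trans)
  then show "0 < \<bar>x i - mu r\<bar>"
    by simp
qed

lemma tied_point_far_from_mean:
  assumes "inj_on mu {..<beta}" "gamma mu nu beta < 1/2"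
    and "i \<in> S x nu beta N r" "i \<in> S x nu beta N q" "r \<noteq> q"
    and "r < beta" "q < beta" "s < beta" "r \<noteq> s" "q \<noteq> s"
  shows "\<exists>p\<in>{r, q}. (1 - 3 * gamma mu nu beta) * \<bar>mu p - mu s\<bar> \<le> \<bar>x i - mu s\<bar>"
proof -
  let ?g = "gamma mu nu beta"
  have "\<bar>x i - nu r\<bar> = \<bar>x i - nu q\<bar>" "\<bar>x i - nu r\<bar> \<le> \<bar>x i - nu s\<bar>"
    using assms(3,4,6-8) by (force simp: S_def)+
  moreover have "nu r \<noteq> nu q"
    using inj_on_centers[OF assms(1,2)] assms(5-7) by (auto simp: inj_on_def)
  ultimately obtain p where p: "p \<in> {r, q}" "\<bar>nu p - nu s\<bar> \<le> \<bar>x i - nu s\<bar>"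
    using equidistant_pair_closer by blast
  then have "p < beta" "p \<noteq> s"
    using assms(6,7,9,10) by auto
  have "\<bar>mu p - nu p\<bar> \<le> ?g * \<bar>mu p - mu s\<bar>"
    using center_dist_le_gamma[OF assms(1,8) \<open>p < beta\<close>, where nu = nu] \<open>p \<noteq> s\<close>
    by (simp add: abs_minus_commute)
  moreover have "\<bar>mu s - nu s\<bar> \<le> ?g * \<bar>mu p - mu s\<bar>"
    using center_dist_le_gamma[OF assms(1) \<open>p < beta\<close> assms(8) \<open>p \<noteq> s\<close>] .
  ultimately have "\<bar>mu p - mu s\<bar> \<le> \<bar>x i - mu s\<bar> + 3 * (?g * \<bar>mu p - mu s\<bar>)"
    using p(2) by (intro dist_to_mean_of_far_center)
  then show ?thesis
    using p(1) by (intro bexI[of _ p]) (auto simp: algebra_simps)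
qed

lemma card_nearest_centers_le_two:
  assumes "inj_on nu {..<beta}" "R \<subseteq> {..<beta}"
  shows "card {r\<in>R. i \<in> S x nu beta N r} \<le> 2"
proof (cases "{r\<in>R. i \<in> S x nu beta N r} = {}")
  case True
  show ?thesis
    unfolding True by simp
next
  case False
  then obtain r0 where r0: "r0 \<in> R" "i \<in> S x nu beta N r0"
    by auto
  have sub: "{r\<in>R. i \<in> S x nu beta N r} \<subseteq> {r\<in>{..<beta}. \<bar>x i - nu r\<bar> = \<bar>x i - nu r0\<bar>}"
  proof
    fix r
    assume "r \<in> {r\<in>R. i \<in> S x nu beta N r}"
    then have "r < beta" "\<bar>x i - nu r\<bar> \<le> \<bar>x i - nu r0\<bar>" "\<bar>x i - nu r0\<bar> \<le> \<bar>x i - nu r\<bar>"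
      using assms(2) r0 by (auto simp: S_def)
    then show "r \<in> {r\<in>{..<beta}. \<bar>x i - nu r\<bar> = \<bar>x i - nu r0\<bar>}"
      by simp
  qed
  have "card {r\<in>{..<beta}. \<bar>x i - nu r\<bar> = \<bar>x i - nu r0\<bar>} \<le> 2"
    using card_equidistant_le_two[OF assms(1)] .
  with card_mono[OF _ sub] show ?thesis
    by simp
qed

lemma rho_in_point_bound:
  assumes "\<forall>i<N. lab i < beta" "inj_on mu {..<beta}" "s < beta" "gamma mu nu beta < 1/4"
    and "\<forall>r<beta. r \<noteq> s \<longrightarrow> D \<le> \<bar>mu r - mu s\<bar>" "i < N"
  shows "real (card {r\<in>{..<beta} - {s}. i \<in> T lab N r \<inter> S x nu beta N s})
           * ((1 - 4 * gamma mu nu beta) / 2 * D) \<le> \<bar>x i - mu (lab i)\<bar>"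
      (is "real (card ?M) * ?w \<le> ?f")
    and "0 < card {r\<in>{..<beta} - {s}. i \<in> T lab N r \<inter> S x nu beta N s} \<Longrightarrow> 0 < \<bar>x i - mu (lab i)\<bar>"
proof -
  have misclassified: "?M = (if lab i \<noteq> s \<and> i \<in> S x nu beta N s then {lab i} else {})"
    using assms(1,6) by (auto simp: T_def)
  have "?w \<le> ?f \<and> 0 < ?f" if "lab i \<noteq> s" "i \<in> S x nu beta N s"
    using misclassified_point_weight[OF assms(2,4) that(2), of "lab i" D] assms(1,3,5,6) that by auto
  then show "real (card ?M) * ?w \<le> ?f" and "0 < card ?M \<Longrightarrow> 0 < ?f"
    unfolding misclassified by (auto split: if_splits)
qed

lemma rho_out_point_bound:
  assumes "inj_on mu {..<beta}" "s < beta" "gamma mu nu beta < 1/4"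
    and "\<forall>r<beta. r \<noteq> s \<longrightarrow> D \<le> \<bar>mu r - mu s\<bar>" "i < N"
  shows "real (card {r\<in>{..<beta} - {s}. i \<in> T lab N s \<inter> S x nu beta N r})
           * ((1 - 4 * gamma mu nu beta) / 2 * D) \<le> \<bar>x i - mu (lab i)\<bar>"
      (is "real (card ?M) * ?w \<le> ?f")
    and "0 < card {r\<in>{..<beta} - {s}. i \<in> T lab N s \<inter> S x nu beta N r} \<Longrightarrow> 0 < \<bar>x i - mu (lab i)\<bar>"
proof -
  let ?g = "gamma mu nu beta"
  define C where "C = {r\<in>{..<beta} - {s}. i \<in> S x nu beta N r}"
  have misclassified: "?M = (if lab i = s then C else {})"
    using assms(5) by (auto simp: T_def C_def)
  have single: "?w \<le> \<bar>x i - mu s\<bar> \<and> 0 < \<bar>x i - mu s\<bar>" if "r \<in> C" for r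
    using misclassified_point_weight[OF assms(1,3), of i x N r s D] that assms(2,4)
    by (auto simp: C_def abs_minus_commute)
  have "card C \<le> 2"
    unfolding C_def using inj_on_centers[OF assms(1)] assms(3)
    by (intro card_nearest_centers_le_two) auto
  then consider "card C = 0" | "card C = 1" | "card C = 2"
    by linarith
  then have C_bound: "real (card C) * ?w \<le> \<bar>x i - mu s\<bar>"
  proof cases
    case 2
    then obtain r where "C = {r}"
      by (rule card_1_singletonE)
    with single show ?thesis
      by simp
  next
    case 3
    then obtain r q where C_eq: "C = {r, q}" "r \<noteq> q"
      unfolding card_2_iff by blast
    then have "r \<in> C" "q \<in> C"
      by auto
    then obtain p where p: "p \<in> {r, q}" "(1 - 3 * ?g) * \<bar>mu p - mu s\<bar> \<le> \<bar>x i - mu s\<bar>"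
      using tied_point_far_from_mean[OF assms(1), of nu i x N r q s] C_eq(2) assms(2,3)
      by (auto simp: C_def)
    then have "p < beta" "p \<noteq> s"
      using \<open>r \<in> C\<close> \<open>q \<in> C\<close> by (auto simp: C_def)
    have "2 * ?w \<le> (1 - 4 * ?g) * \<bar>mu p - mu s\<bar>"
      using assms(3,4) \<open>p < beta\<close> \<open>p \<noteq> s\<close> by (simp add: mult_left_mono)
    also have "\<dots> \<le> (1 - 3 * ?g) * \<bar>mu p - mu s\<bar>"
      using gamma_nonneg by (intro mult_right_mono) auto
    finally show ?thesis
      using 3 p(2) by simp
  qed simp
  show "real (card ?M) * ?w \<le> ?f" and "0 < card ?M \<Longrightarrow> 0 < ?f"
    unfolding misclassified using C_bound single by (auto simp: card_gt_0_iff split: if_splits)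
qed

theorem lemma9:
  fixes x :: "nat \<Rightarrow> real" and lab :: "nat \<Rightarrow> nat" and mu nu :: "nat \<Rightarrow> real"
    and N beta s :: nat and c :: real
  assumes lab_range: "\<forall>i<N. lab i < beta"
    and means_distinct: "inj_on mu {..<beta}"
    and c_pos: "c > 0"
    and s_range: "s < beta"
    and gamma_small: "gamma mu nu beta < 1/4"
    and sep: "\<forall>r<beta. r \<noteq> s \<longrightarrow>
               \<bar>mu r - mu s\<bar> \<ge> c * phi_star x lab mu N / real (ncount lab N s)"
  shows "rho_in x lab nu beta N s \<le> 2 / ((1 - 4 * gamma mu nu beta) * c)
       \<and> rho_out x lab nu beta N s \<le> 2 / ((1 - 4 * gamma mu nu beta) * c)"
proof -
  define D where "D = c * phi_star x lab mu N / real (ncount lab N s)"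
  define k where "k = (1 - 4 * gamma mu nu beta) / 2 * c"
  have D_le: "\<forall>r<beta. r \<noteq> s \<longrightarrow> D \<le> \<bar>mu r - mu s\<bar>"
    using sep by (simp add: D_def)
  have k_pos: "k > 0"
    using gamma_small c_pos by (simp add: k_def)
  have weight: "(1 - 4 * gamma mu nu beta) / 2 * D
      = k * (\<Sum>i<N. \<bar>x i - mu (lab i)\<bar>) / real (ncount lab N s)"
    by (simp add: D_def k_def phi_star_def)
  have T_bound: "i < N" if "i \<in> T lab N r" for i r
    using that by (simp add: T_def)
  note in_bounds =
    rho_in_point_bound[OF lab_range means_distinct s_range gamma_small D_le, unfolded weight]
  note out_bounds =
    rho_out_point_bound[OF means_distinct s_range gamma_small D_le, unfolded weight]
  have "rho_in x lab nu beta N s \<le> 1 / k" "rho_out x lab nu beta N s \<le> 1 / k"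
    unfolding rho_in_def rho_out_def
    by (rule fraction_le_of_multiplicity_bound[where I = "{..<N}" and f = "\<lambda>i. \<bar>x i - mu (lab i)\<bar>"],
        use k_pos in_bounds out_bounds in \<open>auto dest: T_bound\<close>)+
  moreover have "1 / k = 2 / ((1 - 4 * gamma mu nu beta) * c)"
    by (simp add: k_def)
  ultimately show ?thesis
    by simp
qed

end
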